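(* Let $(V,g)$ be a Euclidean vector space of dimension $n\ge3$, $N=\frac{(n-1)(n+2)}{2}$, $\alpha\in[1,N)$, $\theta>-1$. Let $R$ be an algebraic curvature tensor on $V$, $\mathring{R}$ its induced curvature operator of the second kind, and $S$ the scalar curvature of $R$. (1) If $\mathring{R}\in\mathcal{C}(\alpha,\theta)$, then $S\ge0$; moreover $S=0$ implies $\mathring{R}=0$ and $R=0$. (2) If $-\mathring{R}\in\mathcal{C}(\alpha,\theta)$, then $S\le0$; moreover $S=0$ implies $\mathring{R}=0$ and $R=0$. (3) If $\mathring{R}\in\mathring{\mathcal{C}}(\alpha,\theta)$, then $S>0$. (4) If $-\mathring{R}\in\mathring{\mathcal{C}}(\alpha,\theta)$, then $S<0$.
   Context: $S^2_0(V)$ is the space of traceless symmetric two-tensors (dimension $N$). An algebraic curvature tensor is $R\in S^2(\wedge^2V)$ satisfying the first Bianchi identity. $\mathring{R}=\pi\circ\overline{R}:S^2_0(V)\to S^2_0(V)$ with $\overline{R}(h)_{ij}=\sum_{k,l}R_{iklj}h_{kl}$ and $\pi$ the projection onto traceless tensors. For a symmetric operator with eigenvalues $\lambda_1\le\cdots\le\lambda_N$ and average $\bar\lambda$, write $\lambda_1+\cdots+\lambda_\alpha:=\lambda_1+\cdots+\lambda_{[\alpha]}+(\alpha-[\alpha])\lambda_{[\alpha]+1}$; $\mathcal{C}(\alpha,\theta)$ is the cone of symmetric operators on $S^2_0(V)$ with $\alpha^{-1}(\lambda_1+\cdots+\lambda_\alpha)\ge-\theta\bar\lambda$, and $\mathring{\mathcal{C}}(\alpha,\theta)$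 its interior. *)

theory Defs
  imports Complex_Main "HOL-Library.Cardinality"
begin

text \<open>The Euclidean space (V,g) of dimension n = CARD('n) is identified with
  'n \<Rightarrow> real via an orthonormal basis indexed by the finite type 'n.
  Two-tensors are represented by their components h i j in that basis.\<close>

type_synonym 'n tensor2 = "'n \<Rightarrow> 'n \<Rightarrow> real"
type_synonym 'n tensor4 = "'n \<Rightarrow> 'n \<Rightarrow> 'n \<Rightarrow> 'n \<Rightarrow> real"

definition tinner :: "'n::finite tensor2 \<Rightarrow> 'n tensor2 \<Rightarrow> real" where
  "tinner h k = (\<Sum>i\<in>UNIV. \<Sum>j\<in>UNIV. h i j * k i j)"

definition ttrace :: "'n::finite tensor2 \<Rightarrow> real" where
  "ttrace h = (\<Sum>i\<in>UNIV. h i i)"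

definition S20 :: "'n::finite tensor2 set" where
  "S20 = {h. (\<forall>i j. h i j = h j i) \<and> ttrace h = 0}"

text \<open>N = (n-1)(n+2)/2 = dim S^2_0(V).\<close>
definition dimN :: "'n::finite itself \<Rightarrow> nat" where
  "dimN _ = (CARD('n) - 1) * (CARD('n) + 2) div 2"

definition alg_curv_tensor :: "'n::finite tensor4 \<Rightarrow> bool" where
  "alg_curv_tensor R \<longleftrightarrow>
     (\<forall>i j k l. R i j k l = - R j i k l) \<and>
     (\<forall>i j k l. R i j k l = - R i j l k) \<and>
     (\<forall>i j k l. R i j k l = R k l i j) \<and>
     (\<forall>i j k l. R i j k l + R j k i l + R k i j l = 0)"

definition proj0 :: "'n::finite tensor2 \<Rightarrow> 'n tensor2" where
  "proj0 h = (\<lambda>i j. h i j - (ttrace h / real CARD('n)) * (if i = j then 1 else 0))"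

definition Rbar :: "'n::finite tensor4 \<Rightarrow> 'n tensor2 \<Rightarrow> 'n tensor2" where
  "Rbar R h = (\<lambda>i j. \<Sum>k\<in>UNIV. \<Sum>l\<in>UNIV. R i k l j * h k l)"

definition Rring :: "'n::finite tensor4 \<Rightarrow> 'n tensor2 \<Rightarrow> 'n tensor2" where
  "Rring R h = proj0 (Rbar R h)"

text \<open>Scalar curvature, with the sign convention (forced by the formula for Rbar)
  that the sectional curvature of the plane e_i,e_j is R i j i j.\<close>
definition scal :: "'n::finite tensor4 \<Rightarrow> real" where
  "scal R = (\<Sum>i\<in>UNIV. \<Sum>j\<in>UNIV. R i j i j)"

definition is_eigenlist :: "('n::finite tensor2 \<Rightarrow> 'n tensor2) \<Rightarrow> real list \<Rightarrow> bool" where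
  "is_eigenlist A lam \<longleftrightarrow>
     length lam = dimN TYPE('n) \<and> sorted lam \<and>
     (\<exists>e :: nat \<Rightarrow> 'n tensor2.
        (\<forall>p < length lam. e p \<in> S20) \<and>
        (\<forall>p < length lam. \<forall>q < length lam. tinner (e p) (e q) = (if p = q then 1 else 0)) \<and>
        (\<forall>h \<in> S20. h = (\<lambda>i j. \<Sum>p < length lam. tinner h (e p) * e p i j)) \<and>
        (\<forall>p < length lam. A (e p) = (\<lambda>i j. lam ! p * e p i j)))"

text \<open>lam_1 + ... + lam_alpha := lam_1 + ... + lam_[alpha] + (alpha - [alpha]) lam_([alpha]+1)
  (0-based list indexing).\<close>
definition eig_partial :: "real list \<Rightarrow> real \<Rightarrow> real" where
  "eig_partial lam \<alpha> =
     (\<Sum>p < nat \<lfloor>\<alpha>\<rfloor>. lam ! p) + (\<alpha> - of_int \<lfloor>\<alpha>\<rfloor>) * lam ! nat \<lfloor>\<alpha>\<rfloor>"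

definition eig_avg :: "real list \<Rightarrow> real" where
  "eig_avg lam = sum_list lam / real (length lam)"

definition in_cone :: "('n::finite tensor2 \<Rightarrow> 'n tensor2) \<Rightarrow> real \<Rightarrow> real \<Rightarrow> bool" where
  "in_cone A \<alpha> \<theta> \<longleftrightarrow>
     (\<exists>lam. is_eigenlist A lam \<and> eig_partial lam \<alpha> / \<alpha> \<ge> - \<theta> * eig_avg lam)"

definition in_cone_interior :: "('n::finite tensor2 \<Rightarrow> 'n tensor2) \<Rightarrow> real \<Rightarrow> real \<Rightarrow> bool" where
  "in_cone_interior A \<alpha> \<theta> \<longleftrightarrow>
     (\<exists>lam. is_eigenlist A lam \<and> eig_partial lam \<alpha> / \<alpha> > - \<theta> * eig_avg lam)"

end

theory Submission
  imports Defs
begin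

text \<open>
  Contracting R against the reproducing kernel of S^2_0(V) leaves only sectional curvatures, so
  the trace of the curvature operator of the second kind is (1/2 + 1/n) S, and the average
  eigenvalue has the sign of S. For an increasingly sorted list the average of the alpha
  smallest entries is at most the average of all entries; hence the cone condition gives
  (1 + theta) lambda_avg \<ge> 0. If S = 0 it gives
  lambda_1 + ... + lambda_alpha \<ge> 0 = lambda_1 + ... + lambda_N, which for a sorted list forces
  all eigenvalues to vanish. Then the operator is zero, and evaluating it on E_ab + E_ba and
  E_aa - E_bb shows that R is antisymmetric in its middle pair of indices; with the first
  Bianchi identity this gives R = 0.
\<close>

lemma sum_sum_delta_pair:
  fixes f :: "'a::finite \<Rightarrow> 'b::finite \<Rightarrow> 'c::comm_monoid_add"
  shows "(\<Sum>x\<in>UNIV. \<Sum>y\<in>UNIV. if x = a \<and> y = b then f x y else 0) = f a b"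
proof -
  have "(\<Sum>y\<in>UNIV. if x = a \<and> y = b then f x y else 0) = (if x = a then f x b else 0)" for x
    by (cases "x = a") auto
  then show ?thesis by simp
qed

lemma tinner_scale_left: "tinner (\<lambda>i j. c * h i j) k = c * tinner h k"
  unfolding tinner_def by (simp add: sum_distrib_left mult.assoc)

lemma tinner_proj0:
  fixes h k :: "'n::finite tensor2"
  assumes "ttrace k = 0"
  shows "tinner (proj0 h) k = tinner h k"
proof -
  have "tinner (proj0 h) k = tinner h k - ttrace h / real CARD('n) * ttrace k"
    unfolding tinner_def proj0_def ttrace_def
    by (simp add: algebra_simps sum_subtractf if_distrib[where f="\<lambda>z. _ * z"] cong: if_cong)
       (simp add: mult.commute flip: sum_distrib_right sum_divide_distrib)
  then show ?thesis using assms by simp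
qed

text \<open>The orthogonal projection of the matrix unit E_ij onto S^2_0(V).\<close>

definition S20_kernel :: "'n::finite \<Rightarrow> 'n \<Rightarrow> 'n tensor2" where
  "S20_kernel i j = (\<lambda>k l. ((if k = i \<and> l = j then 1 else 0) + (if k = j \<and> l = i then 1 else 0)) / 2
     - (if k = l \<and> i = j then 1 else 0) / real CARD('n))"

lemma S20_kernel_in_S20: "S20_kernel i j \<in> S20"
proof -
  have "ttrace (S20_kernel i j) = 0"
    by (cases "i = j") (auto simp: S20_kernel_def ttrace_def sum_subtractf intro!: sum.neutral)
  then show ?thesis by (auto simp: S20_def S20_kernel_def)
qed

lemma tinner_S20_kernel:
  fixes h :: "'n::finite tensor2"
  assumes "h \<in> S20"
  shows "tinner (S20_kernel i j) h = h i j"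
proof -
  have sym: "h j i = h i j" and tr: "ttrace h = 0" using assms unfolding S20_def by auto
  have "tinner (S20_kernel i j) h = (h i j + h j i) / 2 - (if i = j then ttrace h else 0) / real CARD('n)"
    unfolding tinner_def S20_kernel_def ttrace_def
    by (simp add: ring_distribs add_divide_distrib diff_divide_distrib sum.distrib sum_subtractf
        sum_divide_distrib[symmetric] if_distrib[where f="\<lambda>z. z * _"] sum_sum_delta_pair cong: if_cong)
  then show ?thesis using sym tr by simp
qed

lemma parseval_frame_sum_eq_S20_kernel:
  fixes e :: "nat \<Rightarrow> 'n::finite tensor2"
  assumes "\<forall>p<N. e p \<in> S20"
    and "\<forall>h\<in>S20. h = (\<lambda>i j. \<Sum>p<N. tinner h (e p) * e p i j)"
  shows "(\<Sum>p<N. e p i j * e p k l) = S20_kernel i j k l"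
proof -
  have "S20_kernel i j k l = (\<Sum>p<N. tinner (S20_kernel i j) (e p) * e p k l)"
    using assms(2) S20_kernel_in_S20 by metis
  also have "\<dots> = (\<Sum>p<N. e p i j * e p k l)"
    using assms(1) by (simp add: tinner_S20_kernel)
  finally show ?thesis by simp
qed

lemma contraction_S20_kernel:
  fixes R :: "'n::finite tensor4"
  assumes "alg_curv_tensor R"
  shows "(\<Sum>i\<in>UNIV. \<Sum>j\<in>UNIV. \<Sum>k\<in>UNIV. \<Sum>l\<in>UNIV. R i k l j * S20_kernel i j k l)
      = (1/2 + 1 / real CARD('n)) * scal R"
proof -
  have R_iijj: "R i i j j = 0" and R_ikki: "R i k k i = - R i k i k" for i j k
    using assms unfolding alg_curv_tensor_def by (metis add.inverse_neutral neg_equal_zero)+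
  have inner: "(\<Sum>k\<in>UNIV. \<Sum>l\<in>UNIV. R i k l j * S20_kernel i j k l)
      = R i j i j / 2 - (if i = j then \<Sum>k\<in>UNIV. R i k k i else 0) / real CARD('n)" for i j
    unfolding S20_kernel_def
    by (simp add: R_iijj ring_distribs add_divide_distrib diff_divide_distrib sum.distrib sum_subtractf
        sum_divide_distrib[symmetric] if_distrib[where f="\<lambda>z. _ * z"] sum_sum_delta_pair cong: if_cong)
  have "(\<Sum>i\<in>UNIV. \<Sum>j\<in>UNIV. R i j i j / 2 - (if i = j then \<Sum>k\<in>UNIV. R i k k i else 0) / real CARD('n))
      = (1/2 + 1 / real CARD('n)) * scal R"
    unfolding scal_def R_ikki
    by (simp add: sum_subtractf sum_negf algebra_simps sum.distrib flip: sum_divide_distrib)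
  then show ?thesis by (simp only: inner)
qed

lemma trace_Rring_parseval_frame:
  fixes R :: "'n::finite tensor4" and e :: "nat \<Rightarrow> 'n tensor2"
  assumes "alg_curv_tensor R"
    and e_S20: "\<forall>p<N. e p \<in> S20"
    and e_complete: "\<forall>h\<in>S20. h = (\<lambda>i j. \<Sum>p<N. tinner h (e p) * e p i j)"
  shows "(\<Sum>p<N. tinner (Rring R (e p)) (e p)) = (1/2 + 1 / real CARD('n)) * scal R"
proof -
  have "(\<Sum>p<N. tinner (Rring R (e p)) (e p)) = (\<Sum>p<N. tinner (Rbar R (e p)) (e p))"
    using e_S20 by (simp add: Rring_def tinner_proj0 S20_def)
  also have "\<dots> = (\<Sum>i\<in>UNIV. \<Sum>j\<in>UNIV. \<Sum>k\<in>UNIV. \<Sum>l\<in>UNIV.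
      R i k l j * (\<Sum>p<N. e p i j * e p k l))"
    unfolding tinner_def Rbar_def
    by (simp add: sum_distrib_left sum_distrib_right algebra_simps sum.swap[where B="{..<N}"])
  also have "\<dots> = (\<Sum>i\<in>UNIV. \<Sum>j\<in>UNIV. \<Sum>k\<in>UNIV. \<Sum>l\<in>UNIV. R i k l j * S20_kernel i j k l)"
    by (simp only: parseval_frame_sum_eq_S20_kernel[OF e_S20 e_complete])
  finally show ?thesis using contraction_S20_kernel[OF assms(1)] by simp
qed

lemma sum_eigenlist_scaled_Rring:
  fixes R :: "'n::finite tensor4"
  assumes "alg_curv_tensor R" and "is_eigenlist (\<lambda>h i j. \<sigma> * Rring R h i j) lam"
  shows "sum_list lam = \<sigma> * ((1/2 + 1 / real CARD('n)) * scal R)"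
proof -
  obtain e :: "nat \<Rightarrow> 'n tensor2" where
      e_S20: "\<forall>p<length lam. e p \<in> S20" and
      e_orth: "\<forall>p<length lam. \<forall>q<length lam. tinner (e p) (e q) = (if p = q then 1 else 0)" and
      e_complete: "\<forall>h\<in>S20. h = (\<lambda>i j. \<Sum>p<length lam. tinner h (e p) * e p i j)" and
      e_eigen: "\<forall>p<length lam. (\<lambda>i j. \<sigma> * Rring R (e p) i j) = (\<lambda>i j. lam ! p * e p i j)"
    using assms(2) unfolding is_eigenlist_def by blast
  have "lam ! p = \<sigma> * tinner (Rring R (e p)) (e p)" if "p < length lam" for p
  proof -
    have "\<sigma> * tinner (Rring R (e p)) (e p) = tinner (\<lambda>i j. \<sigma> * Rring R (e p) i j) (e p)"
      by (rule tinner_scale_left[symmetric])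
    also have "\<dots> = lam ! p"
      using that e_eigen e_orth by (simp add: tinner_scale_left)
    finally show ?thesis by simp
  qed
  then have "sum_list lam = \<sigma> * (\<Sum>p<length lam. tinner (Rring R (e p)) (e p))"
    by (simp add: sum_list_sum_nth atLeast0LessThan sum_distrib_left)
  then show ?thesis
    using trace_Rring_parseval_frame[OF assms(1) e_S20 e_complete] by simp
qed

lemma eig_avg_eq_pos_mult_scal:
  fixes R :: "'n::finite tensor4"
  assumes "alg_curv_tensor R" and "is_eigenlist (\<lambda>h i j. \<sigma> * Rring R h i j) lam"
    and "0 < dimN TYPE('n)"
  obtains \<kappa> where "0 < \<kappa>" and "eig_avg lam = \<kappa> * (\<sigma> * scal R)"
proof
  show "0 < (1/2 + 1 / real CARD('n)) / real (dimN TYPE('n))"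
    using assms(3) by (simp add: add_pos_nonneg)
  show "eig_avg lam = (1/2 + 1 / real CARD('n)) / real (dimN TYPE('n)) * (\<sigma> * scal R)"
    using sum_eigenlist_scaled_Rring[OF assms(1,2)] assms(2)
    unfolding eig_avg_def is_eigenlist_def by simp
qed

lemma Rring_sum:
  fixes R :: "'n::finite tensor4"
  shows "Rring R (\<lambda>i j. \<Sum>p<N. c p * g p i j) = (\<lambda>i j. \<Sum>p<N. c p * Rring R (g p) i j)"
  unfolding Rring_def proj0_def Rbar_def ttrace_def
  by (simp add: sum_distrib_left sum_distrib_right sum_subtractf right_diff_distrib sum_divide_distrib
        mult.assoc mult.left_commute sum.swap[where B="{..<N}"])

lemma Rring_vanishes_of_eigenlist_zero:
  fixes R :: "'n::finite tensor4"
  assumes "is_eigenlist (\<lambda>h i j. \<sigma> * Rring R h i j) lam" and "\<sigma> \<noteq> 0"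
    and lam_zero: "\<forall>p<length lam. lam ! p = 0"
    and "h \<in> S20"
  shows "Rring R h = (\<lambda>i j. 0)"
proof -
  obtain e :: "nat \<Rightarrow> 'n tensor2" where
      e_complete: "\<forall>h\<in>S20. h = (\<lambda>i j. \<Sum>p<length lam. tinner h (e p) * e p i j)" and
      e_eigen: "\<forall>p<length lam. (\<lambda>i j. \<sigma> * Rring R (e p) i j) = (\<lambda>i j. lam ! p * e p i j)"
    using assms(1) unfolding is_eigenlist_def by blast
  have e_kernel: "Rring R (e p) = (\<lambda>i j. 0)" if "p < length lam" for p
  proof -
    have "(\<lambda>i j. \<sigma> * Rring R (e p) i j) = (\<lambda>i j. 0)"
      using e_eigen lam_zero that by simp
    then show ?thesis using \<open>\<sigma> \<noteq> 0\<close> by (simp add: fun_eq_iff)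
  qed
  have "Rring R h = Rring R (\<lambda>i j. \<Sum>p<length lam. tinner h (e p) * e p i j)"
    using e_complete \<open>h \<in> S20\<close> by metis
  also have "\<dots> = (\<lambda>i j. 0)"
    unfolding Rring_sum using e_kernel by simp
  finally show ?thesis .
qed

lemma Rbar_scalar_of_Rring_vanishes:
  fixes R :: "'n::finite tensor4"
  assumes "Rring R h = (\<lambda>i j. 0)"
  shows "i \<noteq> j \<Longrightarrow> Rbar R h i j = 0" and "Rbar R h i i = Rbar R h j j"
proof -
  have "Rbar R h i j = (if i = j then ttrace (Rbar R h) / real CARD('n) else 0)" for i j
    using fun_cong[OF fun_cong[OF assms, of i], of j] unfolding Rring_def proj0_def by simp
  then show "i \<noteq> j \<Longrightarrow> Rbar R h i j = 0" and "Rbar R h i i = Rbar R h j j" by simp_all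
qed

definition sym_unit :: "'n \<Rightarrow> 'n \<Rightarrow> 'n tensor2" where
  "sym_unit a b = (\<lambda>k l. (if k = a \<and> l = b then 1 else 0) + (if k = b \<and> l = a then 1 else 0))"

definition diag_unit_diff :: "'n \<Rightarrow> 'n \<Rightarrow> 'n tensor2" where
  "diag_unit_diff a b = (\<lambda>k l. (if k = a \<and> l = a then 1 else 0) - (if k = b \<and> l = b then 1 else 0))"

lemma sym_unit_in_S20: "a \<noteq> b \<Longrightarrow> sym_unit a b \<in> (S20 :: 'n::finite tensor2 set)"
  unfolding S20_def sym_unit_def ttrace_def by (auto intro!: sum.neutral)

lemma diag_unit_diff_in_S20: "diag_unit_diff a b \<in> (S20 :: 'n::finite tensor2 set)"
  unfolding S20_def diag_unit_diff_def ttrace_def by (auto simp: sum_subtractf)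

lemma Rbar_sym_unit: "Rbar R (sym_unit a b) i j = R i a b j + R i b a j"
  unfolding Rbar_def sym_unit_def
  by (simp add: distrib_left sum.distrib if_distrib[where f="\<lambda>z. _ * z"] sum_sum_delta_pair cong: if_cong)

lemma Rbar_diag_unit_diff: "Rbar R (diag_unit_diff a b) i j = R i a a j - R i b b j"
  unfolding Rbar_def diag_unit_diff_def
  by (simp add: right_diff_distrib sum_subtractf if_distrib[where f="\<lambda>z. _ * z"] sum_sum_delta_pair cong: if_cong)

lemma middle_antisym_of_Rring_vanishes:
  fixes R :: "'n::finite tensor4"
  assumes "alg_curv_tensor R" and vanish: "\<forall>h\<in>S20. Rring R h = (\<lambda>i j. 0)"
  shows "R i a b j + R i b a j = 0"
proof -
  have first: "R x y z w = - R y x z w" and pair: "R x y z w = R z w x y" for x y z w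
    using assms(1) unfolding alg_curv_tensor_def by blast+
  have R_xxzw: "R x x z w = 0" for x z w using first[of x x z w] by linarith
  note diag_test = Rbar_scalar_of_Rring_vanishes[OF vanish[rule_format, OF diag_unit_diff_in_S20]]
  have diag: "R x y y z = 0" for x y z
  proof (cases "x = z")
    case True
    have "R x y y x - R x x x x = R y y y y - R y x x y"
      using diag_test(2)[of y x x y] by (simp only: Rbar_diag_unit_diff)
    then have "R x y y x = 0" using R_xxzw[of x x x] R_xxzw[of y y y] pair[of y x x y] by linarith
    then show ?thesis using True by simp
  next
    case False
    then show ?thesis
      using diag_test(1)[OF False, of y x] R_xxzw by (simp add: Rbar_diag_unit_diff)
  qed
  consider "a = b" | "i = j" | "a \<noteq> b" "i \<noteq> j" by blast
  then show ?thesis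
  proof cases
    case 1
    then show ?thesis using diag by simp
  next
    case 2
    then show ?thesis using diag[of b i a] diag[of a i b] pair[of i a b i] pair[of i b a i] by simp
  next
    case 3
    then show ?thesis
      using Rbar_scalar_of_Rring_vanishes(1)[OF vanish[rule_format, OF sym_unit_in_S20] 3(2)]
      by (simp add: Rbar_sym_unit)
  qed
qed

lemma alg_curv_tensor_eq_0_of_middle_antisym:
  fixes R :: "'n::finite tensor4"
  assumes "alg_curv_tensor R" and middle: "\<And>i a b j. R i a b j + R i b a j = 0"
  shows "R = (\<lambda>i j k l. 0)"
proof (intro ext)
  fix i j k l
  have first: "R x y z w = - R y x z w" for x y z w
    using assms(1) unfolding alg_curv_tensor_def by blast
  have "R j k i l = R i j k l" using first[of j i k l] middle[of j k i l] by linarith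
  moreover have "R k i j l = R i j k l" using first[of k i j l] middle[of i k j l] by linarith
  moreover have "R i j k l + R j k i l + R k i j l = 0"
    using assms(1) unfolding alg_curv_tensor_def by blast
  ultimately show "R i j k l = 0" by linarith
qed

lemma eig_partial_split:
  assumes "0 \<le> \<alpha>" and "\<alpha> < real (length lam)"
  obtains m f where "m = nat \<lfloor>\<alpha>\<rfloor>" "\<alpha> = real m + f" "m < length lam"
    and "eig_partial lam \<alpha> = (\<Sum>p<m. lam ! p) + f * lam ! m"
    and "sum_list lam = (\<Sum>p<m. lam ! p) + lam ! m + (\<Sum>p\<in>{Suc m..<length lam}. lam ! p)"
proof
  let ?m = "nat \<lfloor>\<alpha>\<rfloor>" and ?f = "\<alpha> - of_int \<lfloor>\<alpha>\<rfloor>"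
  have m_real: "real ?m = of_int \<lfloor>\<alpha>\<rfloor>" using assms(1) by simp
  then show "\<alpha> = real ?m + ?f" by simp
  show m_less: "?m < length lam" using assms m_real by linarith
  show "eig_partial lam \<alpha> = (\<Sum>p<?m. lam ! p) + ?f * lam ! ?m"
    unfolding eig_partial_def ..
  have "sum_list lam = (\<Sum>p<Suc ?m. lam ! p) + (\<Sum>p\<in>{Suc ?m..<length lam}. lam ! p)"
    unfolding sum_list_sum_nth lessThan_atLeast0
    using m_less by (subst sum.atLeastLessThan_concat) auto
  then show "sum_list lam = (\<Sum>p<?m. lam ! p) + lam ! ?m + (\<Sum>p\<in>{Suc ?m..<length lam}. lam ! p)"
    by simp
qed (rule refl)

lemma sorted_eig_partial_bounds:
  assumes "sorted lam" and "0 \<le> \<alpha>" and "\<alpha> < real (length lam)"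
  defines "c \<equiv> lam ! nat \<lfloor>\<alpha>\<rfloor>"
  shows "eig_partial lam \<alpha> \<le> \<alpha> * c"
    and "(real (length lam) - \<alpha>) * c \<le> sum_list lam - eig_partial lam \<alpha>"
proof -
  obtain m f where m: "m = nat \<lfloor>\<alpha>\<rfloor>" and \<alpha>_eq: "\<alpha> = real m + f" and "m < length lam"
      and partial: "eig_partial lam \<alpha> = (\<Sum>p<m. lam ! p) + f * lam ! m"
      and total: "sum_list lam = (\<Sum>p<m. lam ! p) + lam ! m + (\<Sum>p\<in>{Suc m..<length lam}. lam ! p)"
    using eig_partial_split[OF assms(2,3)] by blast
  have c_eq: "c = lam ! m" unfolding c_def m ..
  have head: "(\<Sum>p<m. lam ! p) \<le> real m * c"
    using sum_bounded_above[of "{..<m}" "\<lambda>p. lam ! p" c] sorted_nth_mono[OF assms(1)] \<open>m < length lam\<close>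
    unfolding c_eq by fastforce
  have tail: "real (length lam - Suc m) * c \<le> (\<Sum>p\<in>{Suc m..<length lam}. lam ! p)"
    using sum_bounded_below[of "{Suc m..<length lam}" c "\<lambda>p. lam ! p"] sorted_nth_mono[OF assms(1)]
    unfolding c_eq by fastforce
  have "eig_partial lam \<alpha> \<le> real m * c + f * c" using partial head c_eq by simp
  also have "\<dots> = \<alpha> * c" using \<alpha>_eq by (simp add: algebra_simps)
  finally show "eig_partial lam \<alpha> \<le> \<alpha> * c" .
  have "(real (length lam) - \<alpha>) * c = real (length lam - Suc m) * c + (1 - f) * c"
    using \<alpha>_eq \<open>m < length lam\<close> by (simp add: of_nat_diff algebra_simps)
  also have "\<dots> \<le> sum_list lam - eig_partial lam \<alpha>"
    using partial total tail c_eq by (simp add: algebra_simps)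
  finally show "(real (length lam) - \<alpha>) * c \<le> sum_list lam - eig_partial lam \<alpha>" .
qed

lemma sorted_eig_partial_avg_le:
  assumes "sorted lam" and "0 < \<alpha>" and "\<alpha> < real (length lam)"
  shows "eig_partial lam \<alpha> / \<alpha> \<le> eig_avg lam"
proof -
  let ?c = "lam ! nat \<lfloor>\<alpha>\<rfloor>" and ?L = "real (length lam)"
  note bounds = sorted_eig_partial_bounds[OF assms(1) less_imp_le[OF assms(2)] assms(3)]
  have "(?L - \<alpha>) * eig_partial lam \<alpha> \<le> (?L - \<alpha>) * (\<alpha> * ?c)"
    using bounds(1) assms(3) by (intro mult_left_mono) auto
  moreover have "\<alpha> * ((?L - \<alpha>) * ?c) \<le> \<alpha> * (sum_list lam - eig_partial lam \<alpha>)"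
    using bounds(2) assms(2) by (intro mult_left_mono) auto
  ultimately have "?L * eig_partial lam \<alpha> \<le> \<alpha> * sum_list lam"
    by (simp add: algebra_simps)
  moreover have "0 < ?L" using assms(2,3) by linarith
  ultimately show ?thesis
    unfolding eig_avg_def using assms(2) by (simp add: field_simps)
qed

lemma sorted_eig_partial_rigid:
  assumes "sorted lam" and "0 < \<alpha>" and "\<alpha> < real (length lam)"
    and "sum_list lam = 0" and "0 \<le> eig_partial lam \<alpha>"
  shows "\<forall>p<length lam. lam ! p = 0"
proof -
  obtain m f where m: "m = nat \<lfloor>\<alpha>\<rfloor>" and "m < length lam"
      and partial: "eig_partial lam \<alpha> = (\<Sum>p<m. lam ! p) + f * lam ! m"
      and total: "sum_list lam = (\<Sum>p<m. lam ! p) + lam ! m + (\<Sum>p\<in>{Suc m..<length lam}. lam ! p)"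
    using eig_partial_split[OF less_imp_le[OF assms(2)] assms(3)] by blast
  note bounds = sorted_eig_partial_bounds[OF assms(1) less_imp_le[OF assms(2)] assms(3), folded m]
  have "0 \<le> \<alpha> * lam ! m" using bounds(1) assms(5) by linarith
  then have "0 \<le> lam ! m" using assms(2) by (simp add: zero_le_mult_iff)
  moreover have "(real (length lam) - \<alpha>) * lam ! m \<le> 0" using bounds(2) assms(4,5) by linarith
  then have "lam ! m \<le> 0" using assms(3) by (simp add: mult_le_0_iff)
  ultimately have "lam ! m = 0" by simp
  have head: "lam ! p \<le> 0" if "p < m" for p
    using sorted_nth_mono[OF assms(1), of p m] that \<open>m < length lam\<close> \<open>lam ! m = 0\<close> by simp
  have tail: "0 \<le> lam ! p" if "p \<in> {Suc m..<length lam}" for p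
    using sorted_nth_mono[OF assms(1), of m p] that \<open>lam ! m = 0\<close> by simp
  have "(\<Sum>p<m. lam ! p) \<le> 0" using head by (intro sum_nonpos) simp
  then have "(\<Sum>p<m. - lam ! p) = 0"
    using partial assms(5) \<open>lam ! m = 0\<close> by (simp add: sum_negf)
  then have head0: "lam ! p = 0" if "p < m" for p
    using sum_nonneg_eq_0_iff[of "{..<m}" "\<lambda>p. - lam ! p"] head that by simp
  have "(\<Sum>p\<in>{Suc m..<length lam}. lam ! p) = 0"
    using total assms(4) \<open>lam ! m = 0\<close> head0 by simp
  then have tail0: "lam ! p = 0" if "p \<in> {Suc m..<length lam}" for p
    using sum_nonneg_eq_0_iff[of "{Suc m..<length lam}" "\<lambda>p. lam ! p"] tail that by simp
  show ?thesis
  proof (intro allI impI)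
    fix p assume "p < length lam"
    then consider "p < m" | "p = m" | "p \<in> {Suc m..<length lam}" by force
    then show "lam ! p = 0" using head0 tail0 \<open>lam ! m = 0\<close> by cases auto
  qed
qed

lemma scal_sign_of_cone:
  fixes R :: "'n::finite tensor4"
  assumes alg: "alg_curv_tensor R" and "\<sigma> \<noteq> 0"
    and "0 < \<alpha>" and "\<alpha> < real (dimN TYPE('n))" and "\<theta> > -1"
    and "in_cone (\<lambda>h i j. \<sigma> * Rring R h i j) \<alpha> \<theta>"
  shows "0 \<le> \<sigma> * scal R \<and>
    (scal R = 0 \<longrightarrow> (\<forall>h\<in>S20. Rring R h = (\<lambda>i j. 0)) \<and> R = (\<lambda>i j k l. 0))"
proof -
  obtain lam where eig: "is_eigenlist (\<lambda>h i j. \<sigma> * Rring R h i j) lam"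
    and cone: "- \<theta> * eig_avg lam \<le> eig_partial lam \<alpha> / \<alpha>"
    using assms(6) unfolding in_cone_def by blast
  have "sorted lam" and len: "length lam = dimN TYPE('n)" using eig unfolding is_eigenlist_def by auto
  then have "eig_partial lam \<alpha> / \<alpha> \<le> eig_avg lam"
    using sorted_eig_partial_avg_le[OF _ assms(3)] assms(4) by simp
  then have "0 \<le> (1 + \<theta>) * eig_avg lam" using cone by (simp add: distrib_right)
  then have "0 \<le> eig_avg lam" using assms(5) by (simp add: zero_le_mult_iff)
  moreover have "0 < dimN TYPE('n)" using assms(3,4) by linarith
  then obtain \<kappa> where "0 < \<kappa>" and avg: "eig_avg lam = \<kappa> * (\<sigma> * scal R)"
    using eig_avg_eq_pos_mult_scal[OF alg eig] by blast
  ultimately have "0 \<le> \<sigma> * scal R" by (simp add: zero_le_mult_iff)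
  moreover have "(\<forall>h\<in>S20. Rring R h = (\<lambda>i j. 0)) \<and> R = (\<lambda>i j k l. 0)" if "scal R = 0"
  proof -
    have "eig_avg lam = 0" using avg that by simp
    then have "sum_list lam = 0" unfolding eig_avg_def using \<open>0 < dimN TYPE('n)\<close> len by simp
    moreover have "0 \<le> eig_partial lam \<alpha>"
      using cone \<open>eig_avg lam = 0\<close> assms(3) by (simp add: zero_le_divide_iff)
    ultimately have "\<forall>p<length lam. lam ! p = 0"
      using sorted_eig_partial_rigid[OF \<open>sorted lam\<close> assms(3)] assms(4) len by simp
    then have vanish: "\<forall>h\<in>S20. Rring R h = (\<lambda>i j. 0)"
      using Rring_vanishes_of_eigenlist_zero[OF eig assms(2)] by blast
    then show ?thesis
      using alg_curv_tensor_eq_0_of_middle_antisym[OF alg middle_antisym_of_Rring_vanishes[OF alg vanish]]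
      by simp
  qed
  ultimately show ?thesis by blast
qed

lemma scal_sign_of_cone_interior:
  fixes R :: "'n::finite tensor4"
  assumes alg: "alg_curv_tensor R" and "0 < \<alpha>" and "\<alpha> < real (dimN TYPE('n))" and "\<theta> > -1"
    and "in_cone_interior (\<lambda>h i j. \<sigma> * Rring R h i j) \<alpha> \<theta>"
  shows "0 < \<sigma> * scal R"
proof -
  obtain lam where eig: "is_eigenlist (\<lambda>h i j. \<sigma> * Rring R h i j) lam"
    and cone: "- \<theta> * eig_avg lam < eig_partial lam \<alpha> / \<alpha>"
    using assms(5) unfolding in_cone_interior_def by blast
  have "sorted lam" and "length lam = dimN TYPE('n)" using eig unfolding is_eigenlist_def by auto
  then have "eig_partial lam \<alpha> / \<alpha> \<le> eig_avg lam"
    using sorted_eig_partial_avg_le[OF _ assms(2)] assms(3) by simp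
  then have "0 < (1 + \<theta>) * eig_avg lam" using cone by (simp add: distrib_right)
  then have "0 < eig_avg lam" using assms(4) by (simp add: zero_less_mult_iff)
  moreover have "0 < dimN TYPE('n)" using assms(2,3) by linarith
  then obtain \<kappa> where "0 < \<kappa>" and "eig_avg lam = \<kappa> * (\<sigma> * scal R)"
    using eig_avg_eq_pos_mult_scal[OF alg eig] by blast
  ultimately show ?thesis by (simp add: zero_less_mult_iff)
qed

theorem proposition2p7:
  fixes R :: "'n::finite tensor4" and \<alpha> \<theta> :: real
  assumes "CARD('n) \<ge> 3"
    and "1 \<le> \<alpha>" and "\<alpha> < real (dimN TYPE('n))"
    and "\<theta> > -1"
    and "alg_curv_tensor R"
  shows "(in_cone (Rring R) \<alpha> \<theta> \<longrightarrow>
            scal R \<ge> 0 \<and>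
            (scal R = 0 \<longrightarrow> (\<forall>h \<in> S20. Rring R h = (\<lambda>i j. 0)) \<and> R = (\<lambda>i j k l. 0)))
       \<and> (in_cone (\<lambda>h. - Rring R h) \<alpha> \<theta> \<longrightarrow>
            scal R \<le> 0 \<and>
            (scal R = 0 \<longrightarrow> (\<forall>h \<in> S20. Rring R h = (\<lambda>i j. 0)) \<and> R = (\<lambda>i j k l. 0)))
       \<and> (in_cone_interior (Rring R) \<alpha> \<theta> \<longrightarrow> scal R > 0)
       \<and> (in_cone_interior (\<lambda>h. - Rring R h) \<alpha> \<theta> \<longrightarrow> scal R < 0)"
proof -
  have "0 < \<alpha>" using assms(2) by simp
  have neg: "(\<lambda>h i j. - Rring R h i j) = (\<lambda>h. - Rring R h)" by (simp add: fun_eq_iff)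
  note sign = scal_sign_of_cone[OF assms(5) _ \<open>0 < \<alpha>\<close> assms(3,4)]
  note sign_interior = scal_sign_of_cone_interior[OF assms(5) \<open>0 < \<alpha>\<close> assms(3,4)]
  from sign[of 1, unfolded mult_1_left, OF one_neq_zero]
    sign[of "- 1", unfolded mult_minus1 neg neg_0_le_iff_le, OF neg_one_neq_zero]
    sign_interior[of 1, unfolded mult_1_left]
    sign_interior[of "- 1", unfolded mult_minus1 neg neg_0_less_iff_less]
  show ?thesis by blast
qed

end
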